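(* Let $G$ be a connected simple cubic graph such that $S_{16}$ admits a $G$-coloring. Then $G$ is isomorphic to $S_{16}$.
   Context: A simple graph has no loops and no parallel edges; a cubic graph is $3$-regular. For a graph $X$ and vertex $x$, $\partial_X(x)$ denotes the set of edges of $X$ incident to $x$. For cubic graphs $G, H$ (loopless, parallel edges allowed), an $H$-coloring of $G$ is a map $f: E(G)\to E(H)$ such that for every vertex $x$ of $G$ there is a vertex $y$ of $H$ with $f(\partial_G(x))=\partial_H(y)$. $S_{16}$ is the simple cubic graph on $16$ vertices defined as follows: it has a central vertex $c$, and for each $i\in\{1,2,3\}$ vertices $v_1^i,\dots,v_5^i$ with edges $v_1^iv_2^i, v_1^iv_3^i, v_1^iv_4^i, v_2^iv_3^i, v_2^iv_4^i, v_3^iv_5^i, v_4^iv_5^i$ and the edge $v_5^ic$ (so $S_{16}$ has $24$ edges, three of which, $v_5^ic$, are bridges). *)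

theory Defs
  imports Main
begin

definition simple_graph :: "'a set \<Rightarrow> 'a set set \<Rightarrow> bool" where
  "simple_graph V E \<longleftrightarrow> finite V \<and>
     (\<forall>e\<in>E. \<exists>u v. u \<in> V \<and> v \<in> V \<and> u \<noteq> v \<and> e = {u, v})"

definition incident :: "'a set set \<Rightarrow> 'a \<Rightarrow> 'a set set" where
  "incident E x = {e \<in> E. x \<in> e}"

definition cubic :: "'a set \<Rightarrow> 'a set set \<Rightarrow> bool" where
  "cubic V E \<longleftrightarrow> (\<forall>x\<in>V. card (incident E x) = 3)"

definition graph_connected :: "'a set \<Rightarrow> 'a set set \<Rightarrow> bool" where
  "graph_connected V E \<longleftrightarrow>
     (\<forall>u\<in>V. \<forall>v\<in>V. (u, v) \<in> {(a, b). {a, b} \<in> E}\<^sup>*)"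

definition H_coloring ::
  "'a set \<Rightarrow> 'a set set \<Rightarrow> 'b set \<Rightarrow> 'b set set \<Rightarrow> ('a set \<Rightarrow> 'b set) \<Rightarrow> bool" where
  "H_coloring VG EG VH EH f \<longleftrightarrow>
     (\<forall>e\<in>EG. f e \<in> EH) \<and>
     (\<forall>x\<in>VG. \<exists>y\<in>VH. f ` incident EG x = incident EH y)"

definition admits_coloring ::
  "'a set \<Rightarrow> 'a set set \<Rightarrow> 'b set \<Rightarrow> 'b set set \<Rightarrow> bool" where
  "admits_coloring VG EG VH EH \<longleftrightarrow> (\<exists>f. H_coloring VG EG VH EH f)"

definition graph_iso :: "'a set \<Rightarrow> 'a set set \<Rightarrow> 'b set \<Rightarrow> 'b set set \<Rightarrow> bool" where
  "graph_iso V1 E1 V2 E2 \<longleftrightarrow>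
     (\<exists>\<phi>. bij_betw \<phi> V1 V2 \<and>
        (\<forall>u\<in>V1. \<forall>v\<in>V1. {u, v} \<in> E1 \<longleftrightarrow> {\<phi> u, \<phi> v} \<in> E2))"

datatype s16v = Cen | Vx nat nat

definition S16_V :: "s16v set" where
  "S16_V = insert Cen {Vx i j | i j. i \<in> {1..3} \<and> j \<in> {1..5}}"

definition S16_E :: "s16v set set" where
  "S16_E = (\<Union>i\<in>{1..3::nat}.
     {{Vx i 1, Vx i 2}, {Vx i 1, Vx i 3}, {Vx i 1, Vx i 4}, {Vx i 2, Vx i 3},
      {Vx i 2, Vx i 4}, {Vx i 3, Vx i 5}, {Vx i 4, Vx i 5}, {Vx i 5, Cen}})"

end

theory Submission
  imports Defs
begin

text \<open>A \<open>G\<close>-colouring \<open>f\<close> of \<open>S\<^sub>1\<^sub>6\<close> determines a vertex map \<open>\<phi>\<close> with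
  \<open>f(\<partial>x) = \<partial>(\<phi> x)\<close>. Since both graphs are cubic, \<open>f\<close> is injective on every \<open>\<partial>x\<close>, and
  \<open>f {x, y} = {\<phi> x, \<phi> y}\<close> whenever \<open>\<phi> x \<noteq> \<phi> y\<close>. Inside each block of \<open>S\<^sub>1\<^sub>6\<close> (a \<open>K\<^sub>4\<close> with
  one edge subdivided) these two facts force \<open>\<phi>\<close> to be injective, and then cubicity of \<open>G\<close>
  makes the image an induced copy of the block, attached to the rest of \<open>G\<close> through a single
  vertex. Two such copies sharing a vertex coincide together with their attachment vertex,
  which would give two bridges at \<open>c\<close> the same colour. Hence the three block images are
  disjoint and avoid \<open>\<phi> c\<close>, so \<open>\<phi>\<close> is injective; it is then a local isomorphism, and
  connectedness of \<open>G\<close> makes it an isomorphism.\<close>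

lemma mem_incident_iff [simp]: "e \<in> incident E x \<longleftrightarrow> e \<in> E \<and> x \<in> e"
  unfolding incident_def by simp

lemma incident_empty: "incident {} x = {}"
  unfolding incident_def by simp

lemma incident_insert:
  "incident (insert e E) x = (if x \<in> e then insert e (incident E x) else incident E x)"
  unfolding incident_def by auto

lemma simple_graph_edgeD:
  assumes "simple_graph V E" and "{x, y} \<in> E"
  shows "x \<in> V" and "y \<in> V" and "x \<noteq> y"
proof -
  obtain u v where "u \<in> V" "v \<in> V" "u \<noteq> v" "{x, y} = {u, v}"
    using assms unfolding simple_graph_def by blast
  then show "x \<in> V" "y \<in> V" "x \<noteq> y"
    by (auto simp: doubleton_eq_iff)
qed

lemma simple_graph_edge_other_end:
  assumes "simple_graph V E" and "e \<in> E" and "a \<in> e"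
  obtains b where "b \<in> V" "b \<noteq> a" "e = {a, b}"
proof -
  obtain u v where "u \<in> V" "v \<in> V" "u \<noteq> v" "e = {u, v}"
    using assms unfolding simple_graph_def by blast
  with \<open>a \<in> e\<close> that show thesis
    by (auto simp: insert_commute)
qed

lemma simple_graph_edge_eq:
  assumes "simple_graph V E" and "e \<in> E" and "a \<in> e" and "b \<in> e" and "a \<noteq> b"
  shows "e = {a, b}"
proof -
  obtain u v where "e = {u, v}"
    using assms(1,2) unfolding simple_graph_def by blast
  with assms(3-5) show ?thesis
    by (auto simp: doubleton_eq_iff)
qed

lemma simple_graph_edge_subset:
  assumes "simple_graph V E" and "e \<in> E"
  shows "e \<subseteq> V"
  using assms unfolding simple_graph_def by force

lemma simple_graph_finite_edges:
  assumes "simple_graph V E"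
  shows "finite E"
proof (rule finite_subset)
  show "E \<subseteq> Pow V"
    using simple_graph_edge_subset[OF assms] by blast
  show "finite (Pow V)"
    using assms unfolding simple_graph_def by simp
qed

lemma simple_graphI:
  assumes "finite V" and "\<And>e. e \<in> E \<Longrightarrow> e \<subseteq> V \<and> card e = 2"
  shows "simple_graph V E"
  using assms unfolding simple_graph_def by (metis card_2_iff insert_subset)

lemma cubic_incident_eq:
  assumes "cubic V E" and "finite E" and "u \<in> V"
    and "{e1, e2, e3} \<subseteq> incident E u" and "distinct [e1, e2, e3]"
  shows "incident E u = {e1, e2, e3}"
proof (rule card_subset_eq[symmetric])
  show "finite (incident E u)"
    using \<open>finite E\<close> unfolding incident_def by simp
  show "card {e1, e2, e3} = card (incident E u)"
    using assms unfolding cubic_def by simp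
qed (rule assms(4))

lemma cubic_neighbours:
  assumes "simple_graph V E" and "cubic V E" and "u \<in> V"
    and "{u, w1} \<in> E" and "{u, w2} \<in> E" and "{u, w3} \<in> E" and "distinct [w1, w2, w3]"
  shows "{u, w} \<in> E \<longleftrightarrow> w \<in> {w1, w2, w3}"
proof
  assume uw: "{u, w} \<in> E"
  have "distinct [{u, w1}, {u, w2}, {u, w3}]"
    using assms(7) by (simp add: doubleton_eq_iff)
  then have "incident E u = {{u, w1}, {u, w2}, {u, w3}}"
    using assms(4-6)
    by (intro cubic_incident_eq[OF assms(2) simple_graph_finite_edges[OF assms(1)] assms(3)])
      simp_all
  then have "{u, w} \<in> {{u, w1}, {u, w2}, {u, w3}}"
    using uw by (metis insertI1 mem_incident_iff)
  moreover have "u \<noteq> w"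
    using simple_graph_edgeD(3)[OF assms(1) uw] .
  ultimately show "w \<in> {w1, w2, w3}"
    by (metis doubleton_eq_iff insert_iff singleton_iff)
qed (use assms in blast)

text \<open>The blocks of \<open>S\<^sub>1\<^sub>6\<close>: \<open>v 1, \<dots>, v 4\<close> span a \<open>K\<^sub>4\<close> whose edge \<open>v 3 v 4\<close> is subdivided by
  \<open>v 5\<close>.\<close>

definition K4_subdivision_in :: "'a set set \<Rightarrow> (nat \<Rightarrow> 'a) \<Rightarrow> bool" where
  "K4_subdivision_in E v \<longleftrightarrow> distinct [v 1, v 2, v 3, v 4, v 5] \<and>
     {v 1, v 2} \<in> E \<and> {v 1, v 3} \<in> E \<and> {v 1, v 4} \<in> E \<and> {v 2, v 3} \<in> E \<and> {v 2, v 4} \<in> E \<and>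
     {v 3, v 5} \<in> E \<and> {v 4, v 5} \<in> E"

definition pendant_K4_subdivision :: "'a set set \<Rightarrow> (nat \<Rightarrow> 'a) \<Rightarrow> 'a \<Rightarrow> bool" where
  "pendant_K4_subdivision E a t \<longleftrightarrow> distinct [a 1, a 2, a 3, a 4, a 5, t] \<and>
     (\<forall>w. {a 1, w} \<in> E \<longleftrightarrow> w \<in> {a 2, a 3, a 4}) \<and> (\<forall>w. {a 2, w} \<in> E \<longleftrightarrow> w \<in> {a 1, a 3, a 4}) \<and>
     (\<forall>w. {a 3, w} \<in> E \<longleftrightarrow> w \<in> {a 1, a 2, a 5}) \<and> (\<forall>w. {a 4, w} \<in> E \<longleftrightarrow> w \<in> {a 1, a 2, a 5}) \<and>
     (\<forall>w. {a 5, w} \<in> E \<longleftrightarrow> w \<in> {a 3, a 4, t})"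

lemma K4_subdivision_in_swap34:
  "K4_subdivision_in E v \<Longrightarrow> K4_subdivision_in E (v(3 := v 4, 4 := v 3))"
  unfolding K4_subdivision_in_def by auto

lemma cubic_K4_subdivision_pendant:
  assumes G: "simple_graph V E" "cubic V E" and K: "K4_subdivision_in E a"
    and t: "{a 5, t} \<in> E" "t \<notin> {a 3, a 4}"
  shows "pendant_K4_subdivision E a t"
proof -
  have d: "distinct [a 1, a 2, a 3, a 4, a 5]"
    and adj: "{a 1, a 2} \<in> E" "{a 1, a 3} \<in> E" "{a 1, a 4} \<in> E" "{a 2, a 3} \<in> E" "{a 2, a 4} \<in> E"
      "{a 3, a 5} \<in> E" "{a 4, a 5} \<in> E"
    using K unfolding K4_subdivision_in_def by simp_all
  have adj': "{a 2, a 1} \<in> E" "{a 3, a 1} \<in> E" "{a 3, a 2} \<in> E" "{a 4, a 1} \<in> E" "{a 4, a 2} \<in> E"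
    "{a 5, a 3} \<in> E" "{a 5, a 4} \<in> E"
    using adj by (simp_all add: insert_commute)
  have V: "a 1 \<in> V" "a 2 \<in> V" "a 3 \<in> V" "a 4 \<in> V" "a 5 \<in> V"
    using simple_graph_edgeD[OF G(1)] adj by blast+
  have t5: "t \<noteq> a 5"
    using simple_graph_edgeD(3)[OF G(1) t(1)] by simp
  note nbrs = cubic_neighbours[OF G]
  have N1: "\<forall>w. {a 1, w} \<in> E \<longleftrightarrow> w \<in> {a 2, a 3, a 4}"
    using nbrs[OF V(1) adj(1-3)] d by simp
  have N2: "\<forall>w. {a 2, w} \<in> E \<longleftrightarrow> w \<in> {a 1, a 3, a 4}"
    using nbrs[OF V(2) adj'(1) adj(4,5)] d by simp
  have N3: "\<forall>w. {a 3, w} \<in> E \<longleftrightarrow> w \<in> {a 1, a 2, a 5}"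
    using nbrs[OF V(3) adj'(2,3) adj(6)] d by simp
  have N4: "\<forall>w. {a 4, w} \<in> E \<longleftrightarrow> w \<in> {a 1, a 2, a 5}"
    using nbrs[OF V(4) adj'(4,5) adj(7)] d by simp
  have t34: "distinct [a 3, a 4, t]"
    using d t(2) by auto
  have N5: "\<forall>w. {a 5, w} \<in> E \<longleftrightarrow> w \<in> {a 3, a 4, t}"
    using nbrs[OF V(5) adj'(6,7) t(1) t34] by simp
  have "{a 1, a 5} \<notin> E" and "{a 2, a 5} \<notin> E"
    using N1[rule_format, of "a 5"] N2[rule_format, of "a 5"] d by auto
  then have "t \<noteq> a 1" and "t \<noteq> a 2"
    using t(1) by (metis insert_commute)+
  with d t34 t5 have "distinct [a 1, a 2, a 3, a 4, a 5, t]"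
    by auto
  with N1 N2 N3 N4 N5 show ?thesis
    unfolding pendant_K4_subdivision_def by simp
qed

lemma atLeastAtMost_1_5_nat: "{1..5::nat} = {1, 2, 3, 4, 5}"
  by auto

text \<open>A shared vertex sits in the same position class in both copies, since the number of
  triangles through it is 2 for \<open>a 1, a 2\<close>, 1 for \<open>a 3, a 4\<close> and 0 for \<open>a 5\<close>; the exact
  neighbourhoods then propagate the identification up to \<open>a 5\<close> and \<open>t\<close>.\<close>

lemma pendant_K4_subdivision_overlap:
  assumes "pendant_K4_subdivision E a s" and "pendant_K4_subdivision E b t"
    and "a k = b l" and "k \<in> {1..5}" and "l \<in> {1..5}"
  shows "a 5 = b 5 \<and> s = t"
proof -
  have "a k \<in> {a 1, a 2, a 3, a 4, a 5}" and "a k \<in> {b 1, b 2, b 3, b 4, b 5}"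
    using assms(3-5) unfolding atLeastAtMost_1_5_nat by auto
  with assms(1,2) show ?thesis
    unfolding pendant_K4_subdivision_def
    by (smt (verit) distinct.simps(2) insert_iff list.set(1) list.set(2) singletonD insert_commute)
qed

locale cubic_coloring =
  fixes V\<^sub>X :: "'a set" and E\<^sub>X :: "'a set set" and V :: "'b set" and E :: "'b set set"
    and f :: "'a set \<Rightarrow> 'b set" and \<phi> :: "'a \<Rightarrow> 'b"
  assumes simple_source: "simple_graph V\<^sub>X E\<^sub>X" and cubic_source: "cubic V\<^sub>X E\<^sub>X"
    and simple_target: "simple_graph V E" and cubic_target: "cubic V E"
    and vertex_map: "x \<in> V\<^sub>X \<Longrightarrow> \<phi> x \<in> V"
    and image_incident: "x \<in> V\<^sub>X \<Longrightarrow> f ` incident E\<^sub>X x = incident E (\<phi> x)"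
begin

lemma inj_on_incident:
  assumes "x \<in> V\<^sub>X"
  shows "inj_on f (incident E\<^sub>X x)"
proof (rule eq_card_imp_inj_on)
  show "finite (incident E\<^sub>X x)"
    using simple_graph_finite_edges[OF simple_source] unfolding incident_def by simp
  show "card (f ` incident E\<^sub>X x) = card (incident E\<^sub>X x)"
    using assms image_incident vertex_map cubic_source cubic_target unfolding cubic_def by simp
qed

lemma image_edge:
  assumes "e \<in> E\<^sub>X" and "x \<in> e"
  shows "f e \<in> incident E (\<phi> x)"
proof -
  have "x \<in> V\<^sub>X"
    using assms simple_graph_edge_subset[OF simple_source] by blast
  then show ?thesis
    using assms image_incident by (metis imageI mem_incident_iff)
qed

lemma image_edge_eq:
  assumes "{x, y} \<in> E\<^sub>X" and "\<phi> x \<noteq> \<phi> y"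
  shows "f {x, y} = {\<phi> x, \<phi> y}"
proof -
  have "f {x, y} \<in> incident E (\<phi> x)" and "f {x, y} \<in> incident E (\<phi> y)"
    using image_edge[OF assms(1)] by blast+
  then show ?thesis
    using simple_graph_edge_eq[OF simple_target] assms(2) by simp
qed

lemma adjacent_images:
  assumes "{x, y} \<in> E\<^sub>X" and "\<phi> x \<noteq> \<phi> y"
  shows "{\<phi> x, \<phi> y} \<in> E"
  using image_edge[OF assms(1), of x] image_edge_eq[OF assms] by simp

lemma image_edges_distinct:
  assumes "e \<in> E\<^sub>X" and "e' \<in> E\<^sub>X" and "x \<in> e" and "x \<in> e'" and "e \<noteq> e'"
  shows "f e \<noteq> f e'"
proof -
  have "x \<in> V\<^sub>X"
    using assms simple_graph_edge_subset[OF simple_source] by blast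
  then show ?thesis
    using assms inj_onD[OF inj_on_incident] by (metis mem_incident_iff)
qed

lemma triangle_collapse:
  assumes "{a, b} \<in> E\<^sub>X" and "{a, c} \<in> E\<^sub>X" and "{b, c} \<in> E\<^sub>X" and "\<phi> a = \<phi> b"
  shows "\<phi> c = \<phi> a"
proof (rule ccontr)
  assume "\<phi> c \<noteq> \<phi> a"
  then have "f {a, c} = f {b, c}"
    using image_edge_eq[OF assms(2)] image_edge_eq[OF assms(3)] assms(4) by simp
  moreover have "{a, c} \<noteq> {b, c}"
    using simple_graph_edgeD(3)[OF simple_source assms(1)] by (auto simp: doubleton_eq_iff)
  ultimately show False
    using image_edges_distinct[OF assms(2,3), of c] by simp
qed

text \<open>Otherwise the triangles collapse \<open>v 1, \<dots>, v 4\<close> onto one vertex \<open>y\<close>, whose three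
  edges are then used up by the \<open>K\<^sub>4\<close>, and both edges at \<open>v 5\<close> receive the same colour.\<close>

lemma K4_subdivision_hubs_separated:
  assumes "K4_subdivision_in E\<^sub>X v"
  shows "\<phi> (v 1) \<noteq> \<phi> (v 2)"
proof
  assume h12: "\<phi> (v 1) = \<phi> (v 2)"
  have d: "v 1 \<noteq> v 2" "v 1 \<noteq> v 3" "v 1 \<noteq> v 4" "v 1 \<noteq> v 5" "v 2 \<noteq> v 3" "v 2 \<noteq> v 4" "v 2 \<noteq> v 5"
      "v 3 \<noteq> v 4" "v 3 \<noteq> v 5" "v 4 \<noteq> v 5"
    and e12: "{v 1, v 2} \<in> E\<^sub>X" and e13: "{v 1, v 3} \<in> E\<^sub>X" and e14: "{v 1, v 4} \<in> E\<^sub>X"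
    and e23: "{v 2, v 3} \<in> E\<^sub>X" and e24: "{v 2, v 4} \<in> E\<^sub>X"
    and e35: "{v 3, v 5} \<in> E\<^sub>X" and e45: "{v 4, v 5} \<in> E\<^sub>X"
    using assms unfolding K4_subdivision_in_def by simp_all
  note d = d d[THEN not_sym]
  define y where "y = \<phi> (v 1)"
  have h3: "\<phi> (v 3) = y" and h4: "\<phi> (v 4) = y"
    using triangle_collapse[OF e12 e13 e23 h12] triangle_collapse[OF e12 e14 e24 h12]
    unfolding y_def by simp_all
  have y: "incident E y = {f {v 1, v 2}, f {v 1, v 3}, f {v 1, v 4}}"
  proof (rule cubic_incident_eq[OF cubic_target simple_graph_finite_edges[OF simple_target]])
    show "y \<in> V"
      using vertex_map simple_graph_edgeD(1)[OF simple_source e12] unfolding y_def .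
    show "{f {v 1, v 2}, f {v 1, v 3}, f {v 1, v 4}} \<subseteq> incident E y"
      using image_edge[OF e12, of "v 1"] image_edge[OF e13, of "v 1"] image_edge[OF e14, of "v 1"]
      unfolding y_def by simp
    show "distinct [f {v 1, v 2}, f {v 1, v 3}, f {v 1, v 4}]"
      using image_edges_distinct[OF e12 e13, of "v 1"] image_edges_distinct[OF e12 e14, of "v 1"]
        image_edges_distinct[OF e13 e14, of "v 1"] d
      by (simp add: doubleton_eq_iff)
  qed
  have "f {v 2, v 3} \<in> incident E y" and "f {v 2, v 4} \<in> incident E y"
    using image_edge[OF e23, of "v 2"] image_edge[OF e24, of "v 2"] h12 unfolding y_def by simp_all
  moreover have "f {v 2, v 3} \<noteq> f {v 1, v 2}" and "f {v 2, v 3} \<noteq> f {v 1, v 3}"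
    and "f {v 2, v 4} \<noteq> f {v 1, v 2}" and "f {v 2, v 4} \<noteq> f {v 1, v 4}"
    using image_edges_distinct[OF e23 e12, of "v 2"] image_edges_distinct[OF e23 e13, of "v 3"]
      image_edges_distinct[OF e24 e12, of "v 2"] image_edges_distinct[OF e24 e14, of "v 4"] d
    by (simp_all add: doubleton_eq_iff)
  ultimately have f23: "f {v 2, v 3} = f {v 1, v 4}" and f24: "f {v 2, v 4} = f {v 1, v 3}"
    using y by simp_all
  have "f {v 3, v 5} = f {v 4, v 5}"
  proof (cases "\<phi> (v 5) = y")
    case True
    have "f {v 3, v 5} \<in> incident E y" and "f {v 4, v 5} \<in> incident E y"
      using image_edge[OF e35, of "v 5"] image_edge[OF e45, of "v 5"] True by simp_all
    moreover have "f {v 3, v 5} \<noteq> f {v 1, v 3}" and "f {v 3, v 5} \<noteq> f {v 2, v 3}"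
      and "f {v 4, v 5} \<noteq> f {v 1, v 4}" and "f {v 4, v 5} \<noteq> f {v 2, v 4}"
      using image_edges_distinct[OF e35 e13, of "v 3"] image_edges_distinct[OF e35 e23, of "v 3"]
        image_edges_distinct[OF e45 e14, of "v 4"] image_edges_distinct[OF e45 e24, of "v 4"] d
      by (simp_all add: doubleton_eq_iff)
    ultimately show ?thesis
      using y f23 f24 by simp
  next
    case False
    then show ?thesis
      using image_edge_eq[OF e35] image_edge_eq[OF e45] h3 h4 by simp
  qed
  moreover have "f {v 3, v 5} \<noteq> f {v 4, v 5}"
    using image_edges_distinct[OF e35 e45, of "v 5"] d by (simp add: doubleton_eq_iff)
  ultimately show False
    by simp
qed

text \<open>Otherwise \<open>f {v 4, v 5}\<close> would be a fourth colour at \<open>\<phi> (v 3)\<close>.\<close>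

lemma K4_subdivision_end_separated:
  assumes "K4_subdivision_in E\<^sub>X v" and "distinct [\<phi> (v 1), \<phi> (v 2), \<phi> (v 3), \<phi> (v 4)]"
  shows "\<phi> (v 3) \<noteq> \<phi> (v 5)"
proof
  assume h35: "\<phi> (v 3) = \<phi> (v 5)"
  have d: "v 1 \<noteq> v 2" "v 1 \<noteq> v 3" "v 1 \<noteq> v 4" "v 1 \<noteq> v 5" "v 2 \<noteq> v 3" "v 2 \<noteq> v 4" "v 2 \<noteq> v 5"
      "v 3 \<noteq> v 4" "v 3 \<noteq> v 5" "v 4 \<noteq> v 5"
    and e13: "{v 1, v 3} \<in> E\<^sub>X" and e23: "{v 2, v 3} \<in> E\<^sub>X"
    and e35: "{v 3, v 5} \<in> E\<^sub>X" and e45: "{v 4, v 5} \<in> E\<^sub>X"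
    using assms(1) unfolding K4_subdivision_in_def by simp_all
  note d = d d[THEN not_sym]
  have u: "incident E (\<phi> (v 3)) = {f {v 1, v 3}, f {v 2, v 3}, f {v 3, v 5}}"
  proof (rule cubic_incident_eq[OF cubic_target simple_graph_finite_edges[OF simple_target]])
    show "\<phi> (v 3) \<in> V"
      using vertex_map simple_graph_edgeD(2)[OF simple_source e13] .
    show "{f {v 1, v 3}, f {v 2, v 3}, f {v 3, v 5}} \<subseteq> incident E (\<phi> (v 3))"
      using image_edge[OF e13, of "v 3"] image_edge[OF e23, of "v 3"] image_edge[OF e35, of "v 3"] by simp
    show "distinct [f {v 1, v 3}, f {v 2, v 3}, f {v 3, v 5}]"
      using image_edges_distinct[OF e13 e23, of "v 3"] image_edges_distinct[OF e13 e35, of "v 3"]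
        image_edges_distinct[OF e23 e35, of "v 3"] d
      by (simp add: doubleton_eq_iff)
  qed
  have "f {v 4, v 5} \<in> incident E (\<phi> (v 3))"
    using image_edge[OF e45, of "v 5"] h35 by simp
  moreover have "f {v 4, v 5} \<noteq> f {v 3, v 5}"
    using image_edges_distinct[OF e45 e35, of "v 5"] d by (simp add: doubleton_eq_iff)
  moreover have "f {v 4, v 5} \<noteq> f {v 1, v 3}" and "f {v 4, v 5} \<noteq> f {v 2, v 3}"
    using image_edge_eq[OF e45] image_edge_eq[OF e13] image_edge_eq[OF e23] h35 assms(2)
    by (auto simp: doubleton_eq_iff)
  ultimately show False
    using u by simp
qed

lemma K4_subdivision_image_distinct:
  assumes K: "K4_subdivision_in E\<^sub>X v"
  shows "distinct [\<phi> (v 1), \<phi> (v 2), \<phi> (v 3), \<phi> (v 4), \<phi> (v 5)]"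
proof -
  have d: "v 1 \<noteq> v 2" "v 1 \<noteq> v 3" "v 1 \<noteq> v 4" "v 1 \<noteq> v 5" "v 2 \<noteq> v 3" "v 2 \<noteq> v 4" "v 2 \<noteq> v 5"
      "v 3 \<noteq> v 4" "v 3 \<noteq> v 5" "v 4 \<noteq> v 5"
    and e12: "{v 1, v 2} \<in> E\<^sub>X" and e13: "{v 1, v 3} \<in> E\<^sub>X" and e14: "{v 1, v 4} \<in> E\<^sub>X"
    and e23: "{v 2, v 3} \<in> E\<^sub>X" and e24: "{v 2, v 4} \<in> E\<^sub>X" and e35: "{v 3, v 5} \<in> E\<^sub>X"
    using K unfolding K4_subdivision_in_def by simp_all
  note d = d d[THEN not_sym]
  have e21: "{v 2, v 1} \<in> E\<^sub>X" and e31: "{v 3, v 1} \<in> E\<^sub>X" and e41: "{v 4, v 1} \<in> E\<^sub>X"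
    and e32: "{v 3, v 2} \<in> E\<^sub>X" and e42: "{v 4, v 2} \<in> E\<^sub>X"
    using e12 e13 e14 e23 e24 by (simp_all add: insert_commute)
  have s12: "\<phi> (v 1) \<noteq> \<phi> (v 2)"
    using K4_subdivision_hubs_separated[OF K] .
  have s13: "\<phi> (v 1) \<noteq> \<phi> (v 3)"
    using triangle_collapse[OF e13 e12 e32] s12 by metis
  have s23: "\<phi> (v 2) \<noteq> \<phi> (v 3)"
    using triangle_collapse[OF e23 e21 e31] s12 by metis
  have s14: "\<phi> (v 1) \<noteq> \<phi> (v 4)"
    using triangle_collapse[OF e14 e12 e42] s12 by metis
  have s24: "\<phi> (v 2) \<noteq> \<phi> (v 4)"
    using triangle_collapse[OF e24 e21 e41] s12 by metis
  have s34: "\<phi> (v 3) \<noteq> \<phi> (v 4)"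
  proof
    assume "\<phi> (v 3) = \<phi> (v 4)"
    then have "f {v 1, v 3} = f {v 1, v 4}"
      using image_edge_eq[OF e13] image_edge_eq[OF e14] s13 s14 by simp
    then show False
      using image_edges_distinct[OF e13 e14, of "v 1"] d by (simp add: doubleton_eq_iff)
  qed
  have s35: "\<phi> (v 3) \<noteq> \<phi> (v 5)"
    using K4_subdivision_end_separated[OF K] s12 s13 s14 s23 s24 s34 by simp
  have s45: "\<phi> (v 4) \<noteq> \<phi> (v 5)"
    using K4_subdivision_end_separated[OF K4_subdivision_in_swap34[OF K]] s12 s13 s14 s23 s24 s34
    by simp
  have "f {v 3, v 5} \<noteq> f {v 3, v 1}" and "f {v 3, v 5} \<noteq> f {v 3, v 2}"
    using image_edges_distinct[OF e35 e31, of "v 3"] image_edges_distinct[OF e35 e32, of "v 3"] d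
    by (simp_all add: doubleton_eq_iff)
  then have s15: "\<phi> (v 1) \<noteq> \<phi> (v 5)" and s25: "\<phi> (v 2) \<noteq> \<phi> (v 5)"
    using image_edge_eq[OF e35 s35] image_edge_eq[OF e31 s13[symmetric]]
      image_edge_eq[OF e32 s23[symmetric]]
    by (metis insert_commute)+
  show ?thesis
    using s12 s13 s14 s15 s23 s24 s25 s34 s35 s45 by simp
qed

lemma K4_subdivision_image:
  assumes K: "K4_subdivision_in E\<^sub>X v" and e5c: "{v 5, c} \<in> E\<^sub>X" and c: "c \<notin> {v 3, v 4}"
  obtains s where "pendant_K4_subdivision E (\<phi> \<circ> v) s" and "f {v 5, c} = {\<phi> (v 5), s}"
proof -
  have e35: "{v 3, v 5} \<in> E\<^sub>X" and e45: "{v 4, v 5} \<in> E\<^sub>X"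
    using K unfolding K4_subdivision_in_def by simp_all
  have d: "distinct [\<phi> (v 1), \<phi> (v 2), \<phi> (v 3), \<phi> (v 4), \<phi> (v 5)]"
    using K4_subdivision_image_distinct[OF K] .
  then have K': "K4_subdivision_in E (\<phi> \<circ> v)"
    using K adjacent_images unfolding K4_subdivision_in_def by simp
  have fE: "f {v 5, c} \<in> E" and "\<phi> (v 5) \<in> f {v 5, c}"
    using image_edge[OF e5c, of "v 5"] by simp_all
  then obtain s where fs: "f {v 5, c} = {\<phi> (v 5), s}"
    using simple_graph_edge_other_end[OF simple_target] by metis
  have "f {v 5, c} \<noteq> f {v 3, v 5}" and "f {v 5, c} \<noteq> f {v 4, v 5}"
    using image_edges_distinct[OF e5c e35, of "v 5"] image_edges_distinct[OF e5c e45, of "v 5"] c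
    by (auto simp: doubleton_eq_iff)
  then have "s \<notin> {\<phi> (v 3), \<phi> (v 4)}"
    using fs image_edge_eq[OF e35] image_edge_eq[OF e45] d by (auto simp: insert_commute)
  then have "pendant_K4_subdivision E (\<phi> \<circ> v) s"
    using cubic_K4_subdivision_pendant[OF simple_target cubic_target K'] fE fs by simp
  with fs show thesis
    using that by blast
qed

lemma lift_adjacency:
  assumes inj: "inj_on \<phi> V\<^sub>X" and x: "x \<in> V\<^sub>X" and adj: "{\<phi> x, w} \<in> E"
  obtains x' where "x' \<in> V\<^sub>X" and "{x, x'} \<in> E\<^sub>X" and "\<phi> x' = w"
proof -
  have "{\<phi> x, w} \<in> f ` incident E\<^sub>X x"
    using adj image_incident[OF x] by simp
  then obtain e where e: "e \<in> E\<^sub>X" "x \<in> e" and fe: "f e = {\<phi> x, w}"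
    by auto
  then obtain x' where x': "x' \<in> V\<^sub>X" "x' \<noteq> x" "e = {x, x'}"
    using simple_graph_edge_other_end[OF simple_source] by metis
  then have "f e = {\<phi> x, \<phi> x'}"
    using image_edge_eq e inj x by (metis inj_on_contraD)
  moreover have "w \<noteq> \<phi> x"
    using simple_graph_edgeD(3)[OF simple_target adj] by simp
  ultimately have "\<phi> x' = w"
    using fe by (metis doubleton_eq_iff)
  with x' e show thesis
    using that by blast
qed

lemma image_eq_if_connected:
  assumes inj: "inj_on \<phi> V\<^sub>X" and conn: "graph_connected V E" and z: "z \<in> V\<^sub>X"
  shows "\<phi> ` V\<^sub>X = V"
proof
  show "\<phi> ` V\<^sub>X \<subseteq> V"
    using vertex_map by blast
  show "V \<subseteq> \<phi> ` V\<^sub>X"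
  proof
    fix v
    assume "v \<in> V"
    then have "(\<phi> z, v) \<in> {(a, b). {a, b} \<in> E}\<^sup>*"
      using conn vertex_map[OF z] unfolding graph_connected_def by blast
    then show "v \<in> \<phi> ` V\<^sub>X"
    proof (induction rule: rtrancl_induct)
      case base
      then show ?case
        using z by simp
    next
      case (step b c)
      then obtain x where "x \<in> V\<^sub>X" "b = \<phi> x"
        by blast
      with step.hyps(2) show ?case
        using lift_adjacency[OF inj] by (metis case_prodD image_eqI mem_Collect_eq)
    qed
  qed
qed

lemma adjacent_iff_images_adjacent:
  assumes inj: "inj_on \<phi> V\<^sub>X" and x: "x \<in> V\<^sub>X" and y: "y \<in> V\<^sub>X"
  shows "{x, y} \<in> E\<^sub>X \<longleftrightarrow> {\<phi> x, \<phi> y} \<in> E"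
proof
  assume "{x, y} \<in> E\<^sub>X"
  moreover have "\<phi> x \<noteq> \<phi> y"
    using simple_graph_edgeD(3)[OF simple_source \<open>{x, y} \<in> E\<^sub>X\<close>] inj x y by (metis inj_onD)
  ultimately show "{\<phi> x, \<phi> y} \<in> E"
    by (rule adjacent_images)
next
  assume "{\<phi> x, \<phi> y} \<in> E"
  then obtain x' where "x' \<in> V\<^sub>X" "{x, x'} \<in> E\<^sub>X" "\<phi> x' = \<phi> y"
    using lift_adjacency[OF inj x] by blast
  then show "{x, y} \<in> E\<^sub>X"
    using inj y by (metis inj_onD)
qed

lemma graph_iso_if_inj_on:
  assumes inj: "inj_on \<phi> V\<^sub>X" and conn: "graph_connected V E" and "V\<^sub>X \<noteq> {}"
  shows "graph_iso V E V\<^sub>X E\<^sub>X"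
proof -
  have bij: "bij_betw \<phi> V\<^sub>X V"
    using inj image_eq_if_connected[OF inj conn] assms(3) unfolding bij_betw_def by blast
  define \<psi> where "\<psi> = inv_into V\<^sub>X \<phi>"
  have \<psi>: "\<psi> u \<in> V\<^sub>X" "\<phi> (\<psi> u) = u" if "u \<in> V" for u
    using that bij unfolding \<psi>_def by (auto simp: bij_betw_def f_inv_into_f inv_into_into)
  have "bij_betw \<psi> V V\<^sub>X"
    using bij_betw_inv_into[OF bij] unfolding \<psi>_def .
  moreover have "{u, v} \<in> E \<longleftrightarrow> {\<psi> u, \<psi> v} \<in> E\<^sub>X" if "u \<in> V" "v \<in> V" for u v
    using adjacent_iff_images_adjacent[OF inj \<psi>(1)[OF that(1)] \<psi>(1)[OF that(2)]] \<psi>(2) that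
    by simp
  ultimately show ?thesis
    unfolding graph_iso_def by blast
qed

end


lemma S16_V_eq:
  "S16_V = {Cen, Vx 1 1, Vx 1 2, Vx 1 3, Vx 1 4, Vx 1 5, Vx 2 1, Vx 2 2, Vx 2 3, Vx 2 4, Vx 2 5,
     Vx 3 1, Vx 3 2, Vx 3 3, Vx 3 4, Vx 3 5}"
proof -
  have "{1..3::nat} = {1, 2, 3}" and "{1..5::nat} = {1, 2, 3, 4, 5}"
    by auto
  then show ?thesis
    unfolding S16_V_def by auto
qed

lemma S16_E_eq:
  "S16_E = {{Vx 1 1, Vx 1 2}, {Vx 1 1, Vx 1 3}, {Vx 1 1, Vx 1 4}, {Vx 1 2, Vx 1 3},
     {Vx 1 2, Vx 1 4}, {Vx 1 3, Vx 1 5}, {Vx 1 4, Vx 1 5}, {Vx 1 5, Cen},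
     {Vx 2 1, Vx 2 2}, {Vx 2 1, Vx 2 3}, {Vx 2 1, Vx 2 4}, {Vx 2 2, Vx 2 3},
     {Vx 2 2, Vx 2 4}, {Vx 2 3, Vx 2 5}, {Vx 2 4, Vx 2 5}, {Vx 2 5, Cen},
     {Vx 3 1, Vx 3 2}, {Vx 3 1, Vx 3 3}, {Vx 3 1, Vx 3 4}, {Vx 3 2, Vx 3 3},
     {Vx 3 2, Vx 3 4}, {Vx 3 3, Vx 3 5}, {Vx 3 4, Vx 3 5}, {Vx 3 5, Cen}}"
proof -
  have "{1..3::nat} = {1, 2, 3}"
    by auto
  then show ?thesis
    unfolding S16_E_def by auto
qed

lemma simple_graph_S16: "simple_graph S16_V S16_E"
proof (rule simple_graphI)
  show "finite S16_V"
    by (simp add: S16_V_eq)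
  show "e \<subseteq> S16_V \<and> card e = 2" if "e \<in> S16_E" for e
    using that unfolding S16_E_eq by (elim insertE emptyE) (simp_all add: S16_V_eq)
qed

lemma cubic_S16: "cubic S16_V S16_E"
  unfolding cubic_def S16_V_eq
  by (simp only: ball_simps insert_iff empty_iff)
    (simp add: S16_E_eq incident_insert incident_empty doubleton_eq_iff)

lemma K4_subdivision_in_S16:
  assumes "i \<in> {1..3}"
  shows "K4_subdivision_in S16_E (Vx i)"
proof -
  have "i = 1 \<or> i = 2 \<or> i = 3"
    using assms by auto
  then show ?thesis
    unfolding K4_subdivision_in_def S16_E_eq by (elim disjE) simp_all
qed

lemma bridge_S16:
  assumes "i \<in> {1..3}"
  shows "{Vx i 5, Cen} \<in> S16_E"
proof -
  have "i = 1 \<or> i = 2 \<or> i = 3"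
    using assms by auto
  then show ?thesis
    unfolding S16_E_eq by (elim disjE) simp_all
qed

locale S16_coloring = cubic_coloring S16_V S16_E V E f \<phi>
  for V :: "'b set" and E :: "'b set set" and f :: "s16v set \<Rightarrow> 'b set" and \<phi> :: "s16v \<Rightarrow> 'b"
begin

lemma block_image:
  assumes "i \<in> {1..3}"
  obtains s where "pendant_K4_subdivision E (\<phi> \<circ> Vx i) s" and "f {Vx i 5, Cen} = {\<phi> (Vx i 5), s}"
  using K4_subdivision_image[OF K4_subdivision_in_S16[OF assms] bridge_S16[OF assms]] by auto

lemma inj_on_block:
  assumes "i \<in> {1..3}"
  shows "inj_on (\<phi> \<circ> Vx i) {1..5}"
  using K4_subdivision_image_distinct[OF K4_subdivision_in_S16[OF assms]]
  unfolding inj_on_def atLeastAtMost_1_5_nat by auto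

lemma bridge_images_distinct:
  assumes "i \<in> {1..3}" and "j \<in> {1..3}" and "i \<noteq> j"
  shows "f {Vx i 5, Cen} \<noteq> f {Vx j 5, Cen}"
  using image_edges_distinct[OF bridge_S16[OF assms(1)] bridge_S16[OF assms(2)], of Cen] assms(3)
  by (simp add: doubleton_eq_iff)

lemma block_images_disjoint:
  assumes i: "i \<in> {1..3}" and j: "j \<in> {1..3}" and "i \<noteq> j"
    and k: "k \<in> {1..5}" and l: "l \<in> {1..5}"
  shows "\<phi> (Vx i k) \<noteq> \<phi> (Vx j l)"
proof
  assume "\<phi> (Vx i k) = \<phi> (Vx j l)"
  then have eq: "(\<phi> \<circ> Vx i) k = (\<phi> \<circ> Vx j) l"
    by simp
  obtain s where A: "pendant_K4_subdivision E (\<phi> \<circ> Vx i) s"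
    and fs: "f {Vx i 5, Cen} = {\<phi> (Vx i 5), s}"
    using block_image[OF i] .
  obtain t where B: "pendant_K4_subdivision E (\<phi> \<circ> Vx j) t"
    and ft: "f {Vx j 5, Cen} = {\<phi> (Vx j 5), t}"
    using block_image[OF j] .
  have "\<phi> (Vx i 5) = \<phi> (Vx j 5) \<and> s = t"
    using pendant_K4_subdivision_overlap[OF A B eq k l] by simp
  then have "f {Vx i 5, Cen} = f {Vx j 5, Cen}"
    using fs ft by simp
  then show False
    using bridge_images_distinct[OF i j \<open>i \<noteq> j\<close>] by simp
qed

text \<open>If \<open>\<phi> c\<close> lay in the image of block \<open>i\<close>, it would be \<open>\<phi> (v\<^sup>i\<^sub>5)\<close>, and the edge coloured
  \<open>f {v\<^sup>j\<^sub>5, c}\<close> of another block \<open>j\<close> would join it to its third neighbour \<open>s\<close>, giving two bridges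
  the colour \<open>{\<phi> (v\<^sup>i\<^sub>5), s}\<close>.\<close>

lemma centre_outside_blocks:
  assumes i: "i \<in> {1..3}" and k: "k \<in> {1..5}"
  shows "\<phi> Cen \<noteq> \<phi> (Vx i k)"
proof
  assume eq: "\<phi> Cen = \<phi> (Vx i k)"
  obtain s where A: "pendant_K4_subdivision E (\<phi> \<circ> Vx i) s"
    and fs: "f {Vx i 5, Cen} = {\<phi> (Vx i 5), s}"
    using block_image[OF i] .
  have "\<phi> Cen \<noteq> s"
    using A k eq unfolding pendant_K4_subdivision_def atLeastAtMost_1_5_nat by auto
  moreover have "\<phi> Cen \<in> f {Vx i 5, Cen}"
    using image_edge[OF bridge_S16[OF i], of Cen] by simp
  ultimately have c5: "\<phi> Cen = \<phi> (Vx i 5)"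
    using fs by simp
  define j where "j = (if i = 1 then 2 else 1 :: nat)"
  have j: "j \<in> {1..3}" "j \<noteq> i"
    unfolding j_def by auto
  have j5: "\<phi> (Vx j 5) \<noteq> \<phi> (Vx i m)" if "m \<in> {1..5}" for m
    using block_images_disjoint[OF j(1) i j(2), of 5 m] that by simp
  then have fj: "f {Vx j 5, Cen} = {\<phi> (Vx j 5), \<phi> Cen}"
    using image_edge_eq[OF bridge_S16[OF j(1)]] c5 by simp
  then have "{\<phi> (Vx i 5), \<phi> (Vx j 5)} \<in> E"
    using image_edge[OF bridge_S16[OF j(1)], of Cen] c5 by (simp add: insert_commute)
  then have "\<phi> (Vx j 5) = s"
    using A j5[of 3] j5[of 4] unfolding pendant_K4_subdivision_def by simp
  then have "f {Vx j 5, Cen} = f {Vx i 5, Cen}"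
    using fj fs c5 by (simp add: insert_commute)
  then show False
    using bridge_images_distinct[OF j(1) i j(2)] by simp
qed

lemma inj_on_S16: "inj_on \<phi> S16_V"
proof (rule inj_onI)
  fix x y
  assume "x \<in> S16_V" and "y \<in> S16_V" and eq: "\<phi> x = \<phi> y"
  then consider "x = Cen" "y = Cen"
    | i k where "x = Vx i k" "i \<in> {1..3}" "k \<in> {1..5}" "y = Cen"
    | j l where "x = Cen" "y = Vx j l" "j \<in> {1..3}" "l \<in> {1..5}"
    | i k j l where "x = Vx i k" "i \<in> {1..3}" "k \<in> {1..5}" "y = Vx j l" "j \<in> {1..3}" "l \<in> {1..5}"
    unfolding S16_V_def by blast
  then show "x = y"
  proof cases
    case 4
    then show ?thesis
      using eq block_images_disjoint inj_on_block by (metis comp_apply inj_onD)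
  qed (use eq centre_outside_blocks in metis)+
qed

end

theorem theorem3:
  fixes V :: "'a set" and E :: "'a set set"
  assumes "simple_graph V E" and "cubic V E" and "graph_connected V E"
    and "admits_coloring S16_V S16_E V E"
  shows "graph_iso V E S16_V S16_E"
proof -
  obtain f where "H_coloring S16_V S16_E V E f"
    using assms(4) unfolding admits_coloring_def by blast
  then obtain \<phi> where "\<forall>x\<in>S16_V. \<phi> x \<in> V \<and> f ` incident S16_E x = incident E (\<phi> x)"
    unfolding H_coloring_def by (metis bchoice)
  then interpret S16_coloring V E f \<phi>
    using simple_graph_S16 cubic_S16 assms(1,2) by unfold_locales auto
  show ?thesis
    using graph_iso_if_inj_on[OF inj_on_S16 assms(3)] unfolding S16_V_def by blast
qed

end
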